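(* Let $\mathbf k$ be an algebraically closed field of characteristic zero. Let $n\geq 1$ and write $n=2^{k_0}p_1^{k_1}\cdots p_l^{k_l}$ with $p_1,\dots,p_l$ distinct odd primes and $k_0,\dots,k_l\in\mathbb N$. Then the number $c(n)$ of monoidal equivalence classes of categories of the form $\mathrm{Vec}_{\mathbb Z_n}^{\zeta}$, with $\zeta$ ranging over the $n$-th roots of unity in $\mathbf k$, is $$c(n)=\begin{cases}\prod_{i=1}^{l}(2k_i+1) & \text{if } k_0=0,\\ 2\prod_{i=1}^{l}(2k_i+1) & \text{if } k_0=1,\\ 4\prod_{i=1}^{l}(2k_i+1) & \text{if } k_0=2,\\ 4(k_0-1)\prod_{i=1}^{l}(2k_i+1) & \text{if } k_0\geq 3.\end{cases}$$
   Context: For an $n$-th root of unity $\zeta$, $\mathrm{Vec}_{\mathbb Z_n}^{\zeta}$ denotes the pointed fusion category of finite-dimensional $\mathbb Z_n$-graded $\mathbf k$-vector spaces with the usual graded tensor product, unit $\delta_0$, unit isomorphisms identities, and associativity isomorphism on $(\delta_i\otimes\delta_j)\otimes\delta_k\to\delta_i\otimes(\delta_j\otimes\delta_k)$ given by multiplication by $\omega_\zeta(i,j,k)=\zeta^{\,i(j+k-\overline{j+k})/n}$, where $i,j,k$ are represented by integers in $\{0,\dots,n-1\}$ and $\overline{m}$ denotes the remainder of $m$ upon division by $n$. *)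

theory Defs
  imports "HOL-Computational_Algebra.Computational_Algebra"
begin

text \<open>The associator of Vec_{Z_n}^zeta on simple objects delta_i, delta_j, delta_k
  (i, j, k in {0..n-1}):  zeta ^ (i (j + k - ((j+k) mod n)) / n).\<close>
definition omega_vec :: "nat \<Rightarrow> 'k::field \<Rightarrow> nat \<Rightarrow> nat \<Rightarrow> nat \<Rightarrow> 'k" where
  "omega_vec n \<zeta> i j k = \<zeta> ^ (i * ((j + k - (j + k) mod n) div n))"

text \<open>A monoidal equivalence Vec_{Z_n}^zeta -> Vec_{Z_n}^zeta', written out on the
  (skeletal, semisimple) data: a bijection sigma of the simple objects {0..n-1}
  compatible with the tensor product (an automorphism of Z_n), nonzero scalars
  mu i j giving the tensor structure J : F delta_i (x) F delta_j -> F(delta_i (x) delta_j),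
  a nonzero scalar phi : 1 -> F 1, subject to the hexagon (associativity) axiom and
  the two unit axioms (unit isomorphisms are identities).\<close>
definition vec_monoidal_equiv :: "nat \<Rightarrow> 'k::field \<Rightarrow> 'k \<Rightarrow> bool" where
  "vec_monoidal_equiv n \<zeta> \<zeta>' \<longleftrightarrow>
     (\<exists>\<sigma> :: nat \<Rightarrow> nat. \<exists>\<mu> :: nat \<Rightarrow> nat \<Rightarrow> 'k. \<exists>\<phi> :: 'k.
        bij_betw \<sigma> {..<n} {..<n} \<and>
        (\<forall>i<n. \<forall>j<n. \<sigma> ((i + j) mod n) = (\<sigma> i + \<sigma> j) mod n) \<and>
        \<phi> \<noteq> 0 \<and> (\<forall>i<n. \<forall>j<n. \<mu> i j \<noteq> 0) \<and>
        (\<forall>i<n. \<forall>j<n. \<forall>k<n.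
            omega_vec n \<zeta> i j k * \<mu> ((i + j) mod n) k * \<mu> i j
          = \<mu> i ((j + k) mod n) * \<mu> j k * omega_vec n \<zeta>' (\<sigma> i) (\<sigma> j) (\<sigma> k)) \<and>
        (\<forall>j<n. \<mu> 0 j * \<phi> = 1) \<and> (\<forall>i<n. \<mu> i 0 * \<phi> = 1))"

definition c_count :: "'k::field itself \<Rightarrow> nat \<Rightarrow> nat" where
  "c_count _ n = card ({\<zeta>::'k. \<zeta> ^ n = 1} //
      {(\<zeta>, \<zeta>'). \<zeta> ^ n = 1 \<and> \<zeta>' ^ n = 1 \<and> vec_monoidal_equiv n \<zeta> \<zeta>'})"

end

theory Submission
  imports Defs "HOL-Number_Theory.Cong"
begin

(* A monoidal equivalence Vec_{Z_n}^zeta -> Vec_{Z_n}^zeta' acts on simple objects by an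
   automorphism i |-> u i of Z_n. Multiplying its hexagon identities at i = k = 1 over all j
   gives zeta = zeta'^(u^2); conversely, for every unit u an explicit tensor structure realises
   an equivalence between Vec^(zeta'^(u^2)) and Vec^zeta'. Writing the roots of unity as powers
   of a primitive root, c(n) becomes the number of orbits of Z_n under multiplication by squares
   of units. This number is multiplicative by the Chinese remainder theorem. In Z_(p^(k+1)) the
   non-units form a copy of Z_(p^k), and the unit orbits are the cosets of the squares U^2, of
   which there are as many as square roots of 1 modulo p^(k+1): two for odd p, and one, two
   and four modulo 2, 4 and 2^(k+3). *)

section \<open>The equivalence criterion\<close>

lemma omega_vec_eq: "omega_vec n \<zeta> i j k = \<zeta> ^ (i * ((j + k) div n))"
  unfolding omega_vec_def by (cases "n = 0") (simp_all add: minus_mod_eq_mult_div)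

lemma sum_lessThan_add_div:
  fixes u n :: nat
  assumes "u < n"
  shows "(\<Sum>j<n. (j + u) div n) = u"
proof -
  have "(\<Sum>j<n. (j + u) div n) = (\<Sum>j<n. if n \<le> j + u then 1 else 0)"
    using assms by (intro sum.cong) (auto simp: div_if less_mult_imp_div_less)
  also have "\<dots> = card {j. j < n \<and> n \<le> j + u}"
    by (simp add: sum.If_cases Int_def)
  also have "{j. j < n \<and> n \<le> j + u} = {n - u..<n}"
    using assms by auto
  finally show ?thesis using assms by simp
qed

lemma prod_omega_vec_diagonal:
  assumes "u < n"
  shows "(\<Prod>j<n. omega_vec n \<zeta> u j u) = \<zeta> ^ (u * u)"
proof -
  have "(\<Prod>j<n. omega_vec n \<zeta> u j u) = \<zeta> ^ (\<Sum>j<n. u * ((j + u) div n))"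
    by (simp add: omega_vec_eq power_sum)
  also have "(\<Sum>j<n. u * ((j + u) div n)) = u * u"
    using sum_lessThan_add_div[OF assms] by (simp add: sum_distrib_left[symmetric])
  finally show ?thesis .
qed

lemma bij_betw_lessThan_mod:
  fixes f :: "nat \<Rightarrow> nat"
  assumes "n > 0" and cancel: "\<And>a b. [f a = f b] (mod n) \<Longrightarrow> [a = b] (mod n)"
  shows "bij_betw (\<lambda>i. f i mod n) {..<n} {..<n}"
proof -
  have inj: "inj_on (\<lambda>i. f i mod n) {..<n}"
  proof (rule inj_onI)
    fix a b assume "a \<in> {..<n}" "b \<in> {..<n}" "f a mod n = f b mod n"
    then show "a = b"
      using cancel[of a b] by (simp add: cong_def)
  qed
  have "(\<lambda>i. f i mod n) ` {..<n} = {..<n}"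
    by (rule endo_inj_surj) (use inj assms in auto)
  with inj show ?thesis by (simp add: bij_betw_def)
qed

lemma bij_betw_add_mod: "n > 0 \<Longrightarrow> bij_betw (\<lambda>i. (a + i) mod n) {..<n} {..<n::nat}"
  by (rule bij_betw_lessThan_mod) (simp_all add: cong_add_lcancel_nat)

lemma bij_betw_mult_mod: "n > 0 \<Longrightarrow> coprime u n \<Longrightarrow> bij_betw (\<lambda>i. (u * i) mod n) {..<n} {..<n::nat}"
  by (rule bij_betw_lessThan_mod) (simp_all add: cong_mult_lcancel_nat)

lemma additive_bij_mod_eq_mult:
  fixes \<sigma> :: "nat \<Rightarrow> nat"
  assumes n: "n \<ge> 2" and bij: "bij_betw \<sigma> {..<n} {..<n}"
    and add: "\<forall>i<n. \<forall>j<n. \<sigma> ((i + j) mod n) = (\<sigma> i + \<sigma> j) mod n"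
  shows "\<forall>i<n. \<sigma> i = (\<sigma> 1 * i) mod n" and "coprime (\<sigma> 1) n"
proof -
  have \<sigma>_lt: "\<sigma> i < n" if "i < n" for i
    using bij that by (auto simp: bij_betw_def)
  have "(\<sigma> 0 + \<sigma> 0) mod n = \<sigma> 0"
    using add[rule_format, of 0 0] n by simp
  then have "[\<sigma> 0 + \<sigma> 0 = \<sigma> 0 + 0] (mod n)"
    using \<sigma>_lt[of 0] n by (simp add: cong_def)
  then have "[\<sigma> 0 = 0] (mod n)"
    by (simp only: cong_add_lcancel_nat)
  then have \<sigma>0: "\<sigma> 0 = 0"
    using \<sigma>_lt[of 0] n by (simp add: cong_def)
  show mult: "\<forall>i<n. \<sigma> i = (\<sigma> 1 * i) mod n"
  proof (intro allI impI)
    fix i assume "i < n"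
    then show "\<sigma> i = (\<sigma> 1 * i) mod n"
    proof (induction i)
      case (Suc i)
      then have "\<sigma> (Suc i) = (\<sigma> 1 + (\<sigma> 1 * i) mod n) mod n"
        using add[rule_format, of i 1] n by (simp add: add.commute)
      also have "\<dots> = (\<sigma> 1 * Suc i) mod n"
        by (simp add: mod_add_right_eq)
      finally show ?case .
    qed (simp add: \<sigma>0)
  qed
  have "1 \<in> \<sigma> ` {..<n}"
    using bij n by (simp add: bij_betw_def)
  then obtain i where "i < n" "\<sigma> i = 1"
    by auto
  then have "[\<sigma> 1 * i = 1] (mod n)"
    using mult[rule_format, OF \<open>i < n\<close>] \<open>\<sigma> i = 1\<close> n by (simp add: cong_def)
  then show "coprime (\<sigma> 1) n"
    unfolding coprime_iff_invertible_nat by auto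
qed

text \<open>Multiplying the hexagon identities with \<open>i = k = 1\<close> over all \<open>j\<close>, the tensor structure
  cancels, because \<open>j \<mapsto> (1 + j) mod n\<close> and \<open>\<sigma>\<close> permute \<open>{..<n}\<close>; what remains compares
  the two diagonal associator products.\<close>
lemma vec_monoidal_equiv_imp_square_power:
  fixes \<zeta> \<zeta>' :: "'k::field"
  assumes n: "n \<ge> 2" and equiv: "vec_monoidal_equiv n \<zeta> \<zeta>'"
  shows "\<exists>u. coprime u n \<and> \<zeta> = \<zeta>' ^ (u * u)"
proof -
  from equiv obtain \<sigma> \<mu> where bij: "bij_betw \<sigma> {..<n} {..<n}"
    and add: "\<forall>i<n. \<forall>j<n. \<sigma> ((i + j) mod n) = (\<sigma> i + \<sigma> j) mod n"
    and \<mu>_nz: "\<forall>i<n. \<forall>j<n. \<mu> i j \<noteq> 0"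
    and hexagon: "\<forall>i<n. \<forall>j<n. \<forall>k<n. omega_vec n \<zeta> i j k * \<mu> ((i + j) mod n) k * \<mu> i j
          = \<mu> i ((j + k) mod n) * \<mu> j k * omega_vec n \<zeta>' (\<sigma> i) (\<sigma> j) (\<sigma> k)"
    unfolding vec_monoidal_equiv_def by blast
  define u where "u = \<sigma> 1"
  have cop: "coprime u n"
    using additive_bij_mod_eq_mult(2)[OF n bij add] by (simp add: u_def)
  have u_lt: "u < n"
    using bij n by (auto simp: bij_betw_def u_def)
  have shift: "(\<Prod>j<n. f ((1 + j) mod n)) = (\<Prod>j<n. f j)" for f :: "nat \<Rightarrow> 'k"
    using prod.reindex_bij_betw[OF bij_betw_add_mod[of n 1]] n by simp
  have permute: "(\<Prod>j<n. f (\<sigma> j)) = (\<Prod>j<n. f j)" for f :: "nat \<Rightarrow> 'k"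
    using prod.reindex_bij_betw[OF bij] by simp
  have "(\<Prod>j<n. omega_vec n \<zeta> 1 j 1) * ((\<Prod>j<n. \<mu> ((1 + j) mod n) 1) * (\<Prod>j<n. \<mu> 1 j))
      = (\<Prod>j<n. omega_vec n \<zeta> 1 j 1 * \<mu> ((1 + j) mod n) 1 * \<mu> 1 j)"
    by (simp add: prod.distrib mult.assoc)
  also have "\<dots> = (\<Prod>j<n. \<mu> 1 ((1 + j) mod n) * \<mu> j 1 * omega_vec n \<zeta>' u (\<sigma> j) u)"
  proof (rule prod.cong)
    fix j assume "j \<in> {..<n}"
    then show "omega_vec n \<zeta> 1 j 1 * \<mu> ((1 + j) mod n) 1 * \<mu> 1 j
        = \<mu> 1 ((1 + j) mod n) * \<mu> j 1 * omega_vec n \<zeta>' u (\<sigma> j) u"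
      using hexagon[rule_format, of 1 j 1] n by (simp add: u_def add.commute)
  qed simp
  also have "\<dots> = (\<Prod>j<n. \<mu> 1 ((1 + j) mod n)) * (\<Prod>j<n. \<mu> j 1) * (\<Prod>j<n. omega_vec n \<zeta>' u (\<sigma> j) u)"
    by (simp add: prod.distrib)
  also have "\<dots> = (\<Prod>j<n. omega_vec n \<zeta>' u j u) * ((\<Prod>j<n. \<mu> ((1 + j) mod n) 1) * (\<Prod>j<n. \<mu> 1 j))"
    using shift[of "\<mu> 1"] shift[of "\<lambda>j. \<mu> j 1"] permute[of "\<lambda>j. omega_vec n \<zeta>' u j u"]
    by (simp add: ac_simps)
  finally have "(\<Prod>j<n. omega_vec n \<zeta> 1 j 1) = (\<Prod>j<n. omega_vec n \<zeta>' u j u)"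
    using \<mu>_nz n by (simp add: prod_zero_iff)
  then have "\<zeta> = \<zeta>' ^ (u * u)"
    using prod_omega_vec_diagonal[of 1 n \<zeta>] prod_omega_vec_diagonal[OF u_lt, of \<zeta>'] n by simp
  with cop show ?thesis by blast
qed

lemma power_int_cong_eq:
  fixes z :: "'a::field"
  assumes root: "z ^ n = 1" and cong: "[a = b] (mod int n)"
  shows "z powi a = z powi b"
proof (cases "n = 0")
  case True
  with cong show ?thesis by (simp add: cong_def)
next
  case False
  then have "z \<noteq> 0"
    using root by (metis power_0_left zero_neq_one)
  moreover obtain t where "b = a + int n * t"
    using cong by (auto simp: cong_iff_lin)
  ultimately show ?thesis
    using root by (simp add: power_int_add power_int_mult)
qed

lemma mult_div_decompose:
  fixes u m n :: nat
  shows "(u * m) div n = u * (m div n) + (u * (m mod n)) div n"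
proof (cases "n = 0")
  case False
  have "u * m = u * (m mod n) + n * (u * (m div n))"
    by (metis add.commute distrib_left mult.left_commute div_mult_mod_eq mult.commute)
  with False show ?thesis by simp
qed simp

lemma hexagon_exponent_cong:
  fixes n u i j k :: nat
  shows "[int (u * u * (i * ((j + k) div n))) - int (u * ((i + j) mod n) * ((u * k) div n))
            - int (u * i * ((u * j) div n))
        = - int (u * i * ((u * ((j + k) mod n)) div n)) - int (u * j * ((u * k) div n))
            + int ((u * i) mod n * (((u * j) mod n + (u * k) mod n) div n))] (mod int n)"
proof -
  define c r qj qk qr qi cij carry where
    "c = (j + k) div n" and "r = (j + k) mod n" and "qj = (u * j) div n" and "qk = (u * k) div n"
    and "qr = (u * r) div n" and "qi = (u * i) div n" and "cij = (i + j) div n"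
    and "carry = ((u * j) mod n + (u * k) mod n) div n"
  have "qj + qk + carry = u * c + qr"
    using div_add1_eq[of "u * j" "u * k" n] mult_div_decompose[of u "j + k" n]
    unfolding c_def r_def qj_def qk_def qr_def carry_def by (simp add: distrib_left)
  from arg_cong[OF this, of int]
  have carry: "int carry = int u * int c + int qr - int qj - int qk"
    by simp
  have "int ((u * i) mod n) + int n * int qi = int u * int i"
    unfolding qi_def of_nat_mult[symmetric] of_nat_add[symmetric] by simp
  then have A: "int ((u * i) mod n) = int u * int i - int n * int qi"
    by linarith
  have "int ((i + j) mod n) + int n * int cij = int i + int j"
    unfolding cij_def of_nat_mult[symmetric] of_nat_add[symmetric] by simp
  then have rij: "int ((i + j) mod n) = int i + int j - int n * int cij"
    by linarith
  show ?thesis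
    unfolding cong_iff_dvd_diff
    unfolding c_def[symmetric] r_def[symmetric] qj_def[symmetric] qk_def[symmetric] qr_def[symmetric]
      carry_def[symmetric] of_nat_mult A rij carry
    by (rule dvdI[of _ _ "int u * int cij * int qk + int qi * int carry"]) (simp add: carry algebra_simps)
qed

text \<open>The tensor structure \<open>\<mu> i j = \<zeta>' ^ (- u i \<lfloor>u j / n\<rfloor>)\<close> is a cochain whose coboundary
  is the ratio of \<open>\<omega>\<^bsub>\<zeta>'\<^esub>\<close> pulled back along \<open>i \<mapsto> u i\<close> and \<open>\<omega>\<^bsub>\<zeta>' ^ (u * u)\<^esub>\<close>.\<close>
lemma vec_monoidal_equiv_of_square_power:
  fixes \<zeta>' :: "'k::field"
  assumes n: "n \<ge> 2" and root: "\<zeta>' ^ n = 1" and cop: "coprime u n"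
  shows "vec_monoidal_equiv n (\<zeta>' ^ (u * u)) \<zeta>'"
proof -
  define \<sigma> where "\<sigma> i = (u * i) mod n" for i
  define \<mu> where "\<mu> i j = \<zeta>' powi - int (u * i * ((u * j) div n))" for i j
  have "\<zeta>' \<noteq> 0"
    using root n by (metis power_0_left zero_neq_one not_numeral_le_zero)
  then have \<mu>_nz: "\<mu> i j \<noteq> 0" for i j
    by (simp add: \<mu>_def)
  have bij: "bij_betw \<sigma> {..<n} {..<n}"
    unfolding \<sigma>_def using bij_betw_mult_mod[of n u] n cop by simp
  have add: "\<sigma> ((i + j) mod n) = (\<sigma> i + \<sigma> j) mod n" for i j
    unfolding \<sigma>_def by (metis mod_add_eq mod_mult_right_eq distrib_left)
  have hexagon: "omega_vec n (\<zeta>' ^ (u * u)) i j k * \<mu> ((i + j) mod n) k * \<mu> i j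
      = \<mu> i ((j + k) mod n) * \<mu> j k * omega_vec n \<zeta>' (\<sigma> i) (\<sigma> j) (\<sigma> k)" for i j k
  proof -
    have "omega_vec n (\<zeta>' ^ (u * u)) i j k * \<mu> ((i + j) mod n) k * \<mu> i j
        = \<zeta>' powi (int (u * u * (i * ((j + k) div n))) - int (u * ((i + j) mod n) * ((u * k) div n))
            - int (u * i * ((u * j) div n)))"
      using \<open>\<zeta>' \<noteq> 0\<close> by (simp add: omega_vec_eq \<mu>_def power_int_add power_int_diff
          power_int_minus field_simps flip: power_int_of_nat power_int_mult)
    also have "\<dots> = \<zeta>' powi (- int (u * i * ((u * ((j + k) mod n)) div n)) - int (u * j * ((u * k) div n))
            + int ((u * i) mod n * (((u * j) mod n + (u * k) mod n) div n)))"
      by (rule power_int_cong_eq[OF root hexagon_exponent_cong])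
    also have "\<dots> = \<mu> i ((j + k) mod n) * \<mu> j k * omega_vec n \<zeta>' (\<sigma> i) (\<sigma> j) (\<sigma> k)"
      using \<open>\<zeta>' \<noteq> 0\<close> by (simp add: omega_vec_eq \<mu>_def \<sigma>_def power_int_add power_int_diff
          power_int_minus field_simps flip: power_int_of_nat)
    finally show ?thesis .
  qed
  show ?thesis
    unfolding vec_monoidal_equiv_def
    by (rule exI[of _ \<sigma>], rule exI[of _ \<mu>], rule exI[of _ 1]) (use bij add \<mu>_nz hexagon in \<open>simp add: \<mu>_def\<close>)
qed

lemma vec_monoidal_equiv_iff_square_power:
  fixes \<zeta> \<zeta>' :: "'k::field"
  assumes "n \<ge> 2" and "\<zeta>' ^ n = 1"
  shows "vec_monoidal_equiv n \<zeta> \<zeta>' \<longleftrightarrow> (\<exists>u. coprime u n \<and> \<zeta> = \<zeta>' ^ (u * u))"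
  using vec_monoidal_equiv_imp_square_power vec_monoidal_equiv_of_square_power assms by blast

section \<open>Primitive roots of unity\<close>

definition primitive_root_of_unity :: "nat \<Rightarrow> 'a::monoid_mult \<Rightarrow> bool" where
  "primitive_root_of_unity n g \<longleftrightarrow> (\<forall>a. g ^ a = 1 \<longleftrightarrow> n dvd a)"

lemma power_gcd_eq_one:
  fixes x :: "'a::monoid_mult"
  assumes "x ^ a = 1" "x ^ b = 1"
  shows "x ^ gcd a b = 1"
proof (cases "a = 0")
  case False
  then obtain s t where st: "a * s = b * t + gcd a b"
    using bezout_nat by blast
  have "1 = x ^ (a * s)"
    by (simp add: power_mult assms)
  also have "\<dots> = x ^ gcd a b"
    by (simp add: st power_add power_mult assms)
  finally show ?thesis by simp
qed (use assms in simp)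

lemma primitive_root_of_unity_1: "primitive_root_of_unity 1 1"
  by (simp add: primitive_root_of_unity_def)

lemma primitive_root_of_unity_mult:
  fixes g h :: "'a::comm_monoid_mult"
  assumes g: "primitive_root_of_unity m g" and h: "primitive_root_of_unity n h"
    and cop: "coprime m n"
  shows "primitive_root_of_unity (m * n) (g * h)"
  unfolding primitive_root_of_unity_def
proof (intro allI iffI)
  fix a assume gh: "(g * h) ^ a = 1"
  have "g ^ (a * m) * h ^ (a * m) = 1"
    using gh by (simp add: power_mult flip: power_mult_distrib)
  moreover have "g ^ (a * m) = 1"
    using g by (simp add: primitive_root_of_unity_def)
  ultimately have "h ^ (a * m) = 1"
    by simp
  then have "n dvd a"
    using h cop by (simp add: primitive_root_of_unity_def coprime_commute coprime_dvd_mult_left_iff)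
  have "g ^ (a * n) * h ^ (a * n) = 1"
    using gh by (simp add: power_mult flip: power_mult_distrib)
  moreover have "h ^ (a * n) = 1"
    using h by (simp add: primitive_root_of_unity_def)
  ultimately have "g ^ (a * n) = 1"
    by simp
  then have "m dvd a"
    using g cop by (simp add: primitive_root_of_unity_def coprime_dvd_mult_left_iff)
  then show "m * n dvd a"
    using \<open>n dvd a\<close> cop by (simp add: divides_mult)
next
  fix a assume "m * n dvd a"
  then have "g ^ a = 1" and "h ^ a = 1"
    using g h by (auto simp: primitive_root_of_unity_def dest: dvd_mult_left dvd_mult_right)
  then show "(g * h) ^ a = 1"
    by (simp add: power_mult_distrib)
qed

lemma root_of_unity_neq_1_exists:
  fixes p :: nat
  assumes p: "prime p"
  shows "\<exists>w::'a::{alg_closed_field, field_char_0}. w \<noteq> 1 \<and> w ^ p = 1"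
proof -
  obtain w :: 'a where "(\<Sum>i\<le>p - 1. 1 * w ^ i) = 0"
    using alg_closed[of "p - 1" "\<lambda>_. 1"] prime_gt_1_nat[OF p] by auto
  then have w_sum: "(\<Sum>i<p. w ^ i) = 0"
    using prime_gt_1_nat[OF p] by (simp add: lessThan_Suc_atMost[symmetric])
  have "w \<noteq> 1"
  proof
    assume "w = 1"
    then have "(of_nat p :: 'a) = 0" using w_sum by simp
    then show False using p by simp
  qed
  moreover have "w ^ p = 1"
    using geometric_sum[of w p] w_sum \<open>w \<noteq> 1\<close> by (simp add: divide_eq_0_iff)
  ultimately show ?thesis by blast
qed

lemma primitive_root_of_unity_prime_power_exists:
  fixes p k :: nat
  assumes p: "prime p"
  shows "\<exists>g::'a::{alg_closed_field, field_char_0}. primitive_root_of_unity (p ^ k) g"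
proof (cases "k = 0")
  case False
  obtain w :: 'a where "w \<noteq> 1" "w ^ p = 1"
    using root_of_unity_neq_1_exists[OF p] by blast
  obtain x :: 'a where x: "x ^ (p ^ (k - 1)) = w"
    using nth_root_exists[of "p ^ (k - 1)" w] prime_gt_0_nat[OF p] by auto
  have "p ^ k = p ^ (k - 1) * p"
    using False by (simp add: power_eq_if)
  then have x_pk: "x ^ (p ^ k) = 1"
    using x \<open>w ^ p = 1\<close> by (simp add: power_mult)
  have "primitive_root_of_unity (p ^ k) x"
    unfolding primitive_root_of_unity_def
  proof (intro allI iffI)
    fix a assume "x ^ a = 1"
    then have x_gcd: "x ^ gcd a (p ^ k) = 1"
      using power_gcd_eq_one x_pk by blast
    obtain j where j: "j \<le> k" "gcd a (p ^ k) = p ^ j"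
      using divides_primepow_nat[OF p, of "gcd a (p ^ k)" k] by auto
    show "p ^ k dvd a"
    proof (cases "j = k")
      case True
      then show ?thesis using j by (metis gcd_dvd1)
    next
      case False
      then have "p ^ j dvd p ^ (k - 1)"
        using j by (simp add: le_imp_power_dvd)
      then have "x ^ (p ^ (k - 1)) = 1"
        using x_gcd j by (auto elim!: dvdE simp: power_mult)
      with x \<open>w \<noteq> 1\<close> show ?thesis by simp
    qed
  next
    fix a assume "p ^ k dvd a"
    then show "x ^ a = 1"
      using x_pk by (auto elim!: dvdE simp: power_mult)
  qed
  then show ?thesis by blast
qed (use primitive_root_of_unity_1 in auto)

lemma primitive_root_of_unity_exists:
  assumes "n \<ge> 1"
  shows "\<exists>g::'a::{alg_closed_field, field_char_0}. primitive_root_of_unity n g"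
proof -
  have "\<exists>g::'a. primitive_root_of_unity (\<Prod>p\<in>P. p ^ e p) g"
    if "finite P" "\<forall>p\<in>P. prime p" for P :: "nat set" and e
    using that
  proof (induction P rule: finite_induct)
    case (insert p P)
    then obtain h :: 'a where h: "primitive_root_of_unity (\<Prod>p\<in>P. p ^ e p) h"
      by auto
    obtain g :: 'a where g: "primitive_root_of_unity (p ^ e p) g"
      using primitive_root_of_unity_prime_power_exists[of p "e p"] insert by auto
    have "coprime (p ^ e p) (\<Prod>p\<in>P. p ^ e p)"
    proof (rule prod_coprime_right)
      fix q assume "q \<in> P"
      then have "coprime p q"
        using insert by (intro primes_coprime) auto
      then show "coprime (p ^ e p) (q ^ e q)"
        by simp
    qed
    then show ?case
      using primitive_root_of_unity_mult[OF g h] insert by auto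
  qed (use primitive_root_of_unity_1 in auto)
  from this[of "prime_factors n" "\<lambda>p. multiplicity p n"] show ?thesis
    using assms prime_factorization_nat[of n] by auto
qed

lemma primitive_root_of_unity_power_eq_iff:
  fixes g :: "'a::field"
  assumes g: "primitive_root_of_unity n g" and n: "n \<ge> 1"
  shows "g ^ a = g ^ b \<longleftrightarrow> [a = b] (mod n)"
proof -
  have "g ^ n = 1"
    using g by (simp add: primitive_root_of_unity_def)
  then have "g \<noteq> 0"
    using n by (auto simp: power_0_left)
  have "g ^ a = g ^ b \<longleftrightarrow> [a = b] (mod n)" if "a \<le> b" for a b
  proof -
    have "g ^ a = g ^ b \<longleftrightarrow> g ^ (b - a) = 1"
      using \<open>g \<noteq> 0\<close> that by (metis le_add_diff_inverse mult_cancel_left1 power_add power_not_zero)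
    also have "\<dots> \<longleftrightarrow> n dvd b - a"
      using g by (simp add: primitive_root_of_unity_def)
    also have "\<dots> \<longleftrightarrow> [a = b] (mod n)"
      using that by (metis cong_altdef_nat cong_sym_eq)
    finally show ?thesis .
  qed
  then show ?thesis
    by (metis cong_sym_eq nat_le_linear)
qed

lemma bij_betw_powers_roots_of_unity:
  fixes g :: "'a::field"
  assumes g: "primitive_root_of_unity n g" and n: "n \<ge> 1"
  shows "bij_betw (\<lambda>a. g ^ a) {..<n} {z. z ^ n = 1}"
proof -
  have inj: "inj_on (\<lambda>a. g ^ a) {..<n}"
    by (rule inj_onI) (simp add: primitive_root_of_unity_power_eq_iff[OF g n] cong_def)
  have "(g ^ a) ^ n = 1" for a
    using g by (simp add: primitive_root_of_unity_def flip: power_mult mult.commute)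
  then have sub: "(\<lambda>a. g ^ a) ` {..<n} \<subseteq> {z. z ^ n = 1}"
    by auto
  define P :: "'a poly" where "P = monom 1 n + [:-1:]"
  have "degree P = n"
    using n unfolding P_def by (subst degree_add_eq_left) (simp_all add: degree_monom_eq)
  then have "P \<noteq> 0"
    using n by auto
  have roots: "{z. z ^ n = 1} = {z. poly P z = 0}"
    by (simp add: P_def poly_monom)
  have "card {z. z ^ n = (1::'a)} \<le> card ((\<lambda>a. g ^ a) ` {..<n})"
    using card_poly_roots_bound[OF \<open>P \<noteq> 0\<close>] \<open>degree P = n\<close> card_image[OF inj] roots by simp
  then have "(\<lambda>a. g ^ a) ` {..<n} = {z. z ^ n = 1}"
    using card_seteq[OF _ sub] poly_roots_finite[OF \<open>P \<noteq> 0\<close>] roots by simp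
  with inj show ?thesis
    by (simp add: bij_betw_def)
qed

lemma card_quotient_bij_betw:
  assumes f: "bij_betw f A B" and R: "R \<subseteq> A \<times> A" and E: "E \<subseteq> B \<times> B"
    and rel_iff: "\<And>a b. a \<in> A \<Longrightarrow> b \<in> A \<Longrightarrow> (a, b) \<in> R \<longleftrightarrow> (f a, f b) \<in> E"
  shows "card (A // R) = card (B // E)"
proof -
  have inj: "inj_on f A" and B: "B = f ` A"
    using f by (auto simp: bij_betw_def)
  have class_image: "f ` (R `` {a}) = E `` {f a}" if "a \<in> A" for a
  proof
    show "f ` (R `` {a}) \<subseteq> E `` {f a}"
      using R rel_iff that by auto
    show "E `` {f a} \<subseteq> f ` (R `` {a})"
      using E B rel_iff that by fastforce
  qed
  have "B // E = (\<lambda>X. f ` X) ` (A // R)"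
    unfolding quotient_def B using class_image by auto
  moreover have "inj_on (\<lambda>X. f ` X) (A // R)"
  proof (rule inj_onI)
    fix X Y assume "X \<in> A // R" "Y \<in> A // R" "f ` X = f ` Y"
    moreover have "X \<subseteq> A" "Y \<subseteq> A"
      using calculation R unfolding quotient_def by auto
    ultimately show "X = Y"
      using inj inj_on_image_eq_iff by metis
  qed
  ultimately show ?thesis
    by (simp add: card_image)
qed

lemma card_quotient_Times:
  assumes R: "equiv A R" and S: "equiv B S"
  shows "card ((A \<times> B) // {((a, b), (a', b')). (a, a') \<in> R \<and> (b, b') \<in> S})
    = card (A // R) * card (B // S)"
proof -
  let ?P = "{((a, b), (a', b')). (a, a') \<in> R \<and> (b, b') \<in> S}"
  have class_eq: "?P `` {(a, b)} = R `` {a} \<times> S `` {b}" for a b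
    by auto
  have "(A \<times> B) // ?P = (\<lambda>(X, Y). X \<times> Y) ` (A // R \<times> B // S)"
    unfolding quotient_def using class_eq by (auto simp: image_iff)
  moreover have "inj_on (\<lambda>(X, Y). X \<times> Y) (A // R \<times> B // S)"
  proof (rule inj_onI, clarify)
    fix X Y X' Y' assume "X \<in> A // R" "Y \<in> B // S" "X' \<in> A // R" "Y' \<in> B // S" "X \<times> Y = X' \<times> Y'"
    moreover have "X \<noteq> {}" "Y \<noteq> {}" "X' \<noteq> {}" "Y' \<noteq> {}"
      using calculation in_quotient_imp_non_empty R S by metis+
    ultimately show "X = X' \<and> Y = Y'"
      by (simp add: times_eq_iff)
  qed
  ultimately show ?thesis
    by (simp add: card_image card_cartesian_product)
qed

lemma card_quotient_Un:
  assumes R: "R \<subseteq> A \<times> A \<union> B \<times> B" and disj: "A \<inter> B = {}"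
    and refl: "\<And>x. x \<in> A \<union> B \<Longrightarrow> (x, x) \<in> R" and fin: "finite A" "finite B"
  shows "card ((A \<union> B) // R) = card (A // (R \<inter> A \<times> A)) + card (B // (R \<inter> B \<times> B))"
proof -
  have "(A \<union> B) // R = A // (R \<inter> A \<times> A) \<union> B // (R \<inter> B \<times> B)"
    unfolding quotient_def using R disj by blast
  moreover have "A // (R \<inter> A \<times> A) \<inter> B // (R \<inter> B \<times> B) = {}"
    unfolding quotient_def using refl disj by blast
  moreover have "finite (A // (R \<inter> A \<times> A))" "finite (B // (R \<inter> B \<times> B))"
    by (rule finite_quotient; use fin in auto)+
  ultimately show ?thesis
    by (simp add: card_Un_disjoint)
qed

section \<open>Orbits of multiplication by squares of units\<close>

definition unit_square_rel :: "nat \<Rightarrow> (nat \<times> nat) set" where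
  "unit_square_rel n = {(a, b). a < n \<and> b < n \<and> (\<exists>u. coprime u n \<and> [a = u * u * b] (mod n))}"

definition num_unit_square_classes :: "nat \<Rightarrow> nat" where
  "num_unit_square_classes n = card ({..<n} // unit_square_rel n)"

lemma unit_square_rel_subset: "unit_square_rel n \<subseteq> {..<n} \<times> {..<n}"
  by (auto simp: unit_square_rel_def)

lemma equiv_unit_square_rel: "equiv {..<n} (unit_square_rel n)"
proof (rule equivI)
  show "refl_on {..<n} (unit_square_rel n)"
    by (auto simp: refl_on_def unit_square_rel_def intro!: exI[of _ 1])
  show "sym (unit_square_rel n)"
  proof (rule symI)
    fix a b assume "(a, b) \<in> unit_square_rel n"
    then obtain u where ab: "a < n" "b < n" "coprime u n" "[a = u * u * b] (mod n)"
      by (auto simp: unit_square_rel_def)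
    obtain v where v: "[u * v = 1] (mod n)"
      using cong_solve_coprime_nat[OF ab(3)] by auto
    have "coprime v n"
      using v coprime_iff_invertible_nat by (metis One_nat_def mult.commute)
    have "[v * v * a = v * v * (u * u * b)] (mod n)"
      using ab(4) by (rule cong_scalar_left)
    moreover have "v * v * (u * u * b) = (u * v) * (u * v) * b"
      by (simp add: algebra_simps)
    moreover have "[(u * v) * (u * v) * b = 1 * 1 * b] (mod n)"
      using v by (intro cong_mult cong_refl)
    ultimately have "[b = v * v * a] (mod n)"
      by (metis cong_sym cong_trans mult_1)
    with ab \<open>coprime v n\<close> show "(b, a) \<in> unit_square_rel n"
      by (auto simp: unit_square_rel_def)
  qed
  show "trans (unit_square_rel n)"
  proof (rule transI)
    fix a b c assume "(a, b) \<in> unit_square_rel n" "(b, c) \<in> unit_square_rel n"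
    then obtain u w where h: "a < n" "c < n" "coprime u n" "[a = u * u * b] (mod n)"
      "coprime w n" "[b = w * w * c] (mod n)"
      by (auto simp: unit_square_rel_def)
    have "[u * u * b = u * u * (w * w * c)] (mod n)"
      using h(6) by (rule cong_scalar_left)
    then have "[a = (u * w) * (u * w) * c] (mod n)"
      using h(4) by (metis cong_trans mult.assoc mult.left_commute)
    moreover have "coprime (u * w) n"
      using h by simp
    ultimately show "(a, c) \<in> unit_square_rel n"
      using h unfolding unit_square_rel_def by blast
  qed
qed (rule unit_square_rel_subset)

lemma num_unit_square_classes_Suc_0 [simp]: "num_unit_square_classes (Suc 0) = 1"
proof -
  have "{..<Suc 0} // unit_square_rel (Suc 0) = {unit_square_rel (Suc 0) `` {0}}"
    by (auto simp: quotient_def)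
  then show ?thesis
    by (simp add: num_unit_square_classes_def)
qed

lemma bij_betw_mod_pair:
  fixes m1 m2 :: nat
  assumes cop: "coprime m1 m2" and "m1 > 0" "m2 > 0"
  shows "bij_betw (\<lambda>x. (x mod m1, x mod m2)) {..<m1 * m2} ({..<m1} \<times> {..<m2})"
proof -
  have inj: "inj_on (\<lambda>x. (x mod m1, x mod m2)) {..<m1 * m2}"
  proof (rule inj_onI)
    fix x y assume "x \<in> {..<m1 * m2}" "y \<in> {..<m1 * m2}" "(x mod m1, x mod m2) = (y mod m1, y mod m2)"
    then show "x = y"
      using coprime_cong_mult_nat[OF _ _ cop, of x y] by (auto simp: cong_def)
  qed
  moreover have "(\<lambda>x. (x mod m1, x mod m2)) ` {..<m1 * m2} \<subseteq> {..<m1} \<times> {..<m2}"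
    using assms by auto
  moreover have "card ((\<lambda>x. (x mod m1, x mod m2)) ` {..<m1 * m2}) = card ({..<m1} \<times> {..<m2})"
    using card_image[OF inj] by (simp add: card_cartesian_product)
  ultimately show ?thesis
    by (simp add: bij_betw_def card_subset_eq)
qed

lemma unit_square_rel_mult_iff:
  fixes m1 m2 :: nat
  assumes cop: "coprime m1 m2" and x: "x < m1 * m2" and y: "y < m1 * m2"
  shows "(x, y) \<in> unit_square_rel (m1 * m2) \<longleftrightarrow>
    (x mod m1, y mod m1) \<in> unit_square_rel m1 \<and> (x mod m2, y mod m2) \<in> unit_square_rel m2"
proof -
  have pos: "m1 > 0" "m2 > 0"
    using x by (auto intro: gr0I)
  have mod_iff: "(x mod m, y mod m) \<in> unit_square_rel m \<longleftrightarrow> (\<exists>u. coprime u m \<and> [x = u * u * y] (mod m))"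
    if "m > 0" for m
    using that by (auto simp: unit_square_rel_def cong_def mod_mult_right_eq)
  have "(\<exists>u. coprime u (m1 * m2) \<and> [x = u * u * y] (mod m1 * m2)) \<longleftrightarrow>
      (\<exists>u. coprime u m1 \<and> [x = u * u * y] (mod m1)) \<and> (\<exists>u. coprime u m2 \<and> [x = u * u * y] (mod m2))"
  proof safe
    fix u assume u: "coprime u (m1 * m2)" "[x = u * u * y] (mod m1 * m2)"
    then have "[x = u * u * y] (mod m1)" "[x = u * u * y] (mod m2)"
      using cong_modulus_mult_nat[of x "u * u * y" m1 m2] cong_modulus_mult_nat[of x "u * u * y" m2 m1]
      by (simp_all add: mult.commute)
    with u show "\<exists>u. coprime u m1 \<and> [x = u * u * y] (mod m1)" "\<exists>u. coprime u m2 \<and> [x = u * u * y] (mod m2)"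
      by auto
  next
    fix u1 u2 assume u1: "coprime u1 m1" "[x = u1 * u1 * y] (mod m1)"
      and u2: "coprime u2 m2" "[x = u2 * u2 * y] (mod m2)"
    obtain u where u: "[u = u1] (mod m1)" "[u = u2] (mod m2)"
      using binary_chinese_remainder_nat[OF cop] by blast
    have change_unit: "[x = u * u * y] (mod m)" if "[x = v * v * y] (mod m)" "[u = v] (mod m)" for v m
    proof -
      have "[v * v * y = u * u * y] (mod m)"
        using cong_sym[OF that(2)] by (intro cong_mult cong_refl)
      with that(1) show ?thesis
        by (rule cong_trans)
    qed
    have "[x = u * u * y] (mod m1)" "[x = u * u * y] (mod m2)"
      using change_unit u1(2) u(1) change_unit u2(2) u(2) by blast+
    moreover have "coprime u m1" "coprime u m2"
      using cong_imp_coprime[OF cong_sym[OF u(1)] u1(1)] cong_imp_coprime[OF cong_sym[OF u(2)] u2(1)] .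
    ultimately show "\<exists>u. coprime u (m1 * m2) \<and> [x = u * u * y] (mod m1 * m2)"
      using coprime_cong_mult_nat[OF _ _ cop] by auto
  qed
  then show ?thesis
    using x y pos mod_iff by (simp add: unit_square_rel_def)
qed

lemma num_unit_square_classes_mult:
  assumes cop: "coprime m1 m2" and "m1 > 0" "m2 > 0"
  shows "num_unit_square_classes (m1 * m2) = num_unit_square_classes m1 * num_unit_square_classes m2"
proof -
  let ?P = "{((a, b), (a', b')). (a, a') \<in> unit_square_rel m1 \<and> (b, b') \<in> unit_square_rel m2}"
  have "num_unit_square_classes (m1 * m2) = card (({..<m1} \<times> {..<m2}) // ?P)"
    unfolding num_unit_square_classes_def
    by (rule card_quotient_bij_betw[OF bij_betw_mod_pair[OF assms] unit_square_rel_subset])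
      (use unit_square_rel_subset unit_square_rel_mult_iff[OF cop] in auto)
  also have "\<dots> = num_unit_square_classes m1 * num_unit_square_classes m2"
    unfolding num_unit_square_classes_def by (rule card_quotient_Times[OF equiv_unit_square_rel equiv_unit_square_rel])
  finally show ?thesis .
qed

definition units_mod :: "nat \<Rightarrow> nat set" where
  "units_mod q = {a. a < q \<and> coprime a q}"

definition unit_squares_mod :: "nat \<Rightarrow> nat set" where
  "unit_squares_mod q = (\<lambda>v. (v * v) mod q) ` units_mod q"

definition square_roots_of_one :: "nat \<Rightarrow> nat set" where
  "square_roots_of_one q = {x. x < q \<and> [x * x = 1] (mod q)}"

lemma square_roots_of_one_subset_units_mod: "square_roots_of_one q \<subseteq> units_mod q"
proof
  fix x assume "x \<in> square_roots_of_one q"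
  then have "x < q" "[x * x = 1] (mod q)"
    by (auto simp: square_roots_of_one_def)
  then show "x \<in> units_mod q"
    using coprime_iff_invertible_nat by (auto simp: units_mod_def)
qed

lemma card_image_mult_mod:
  fixes y q :: nat
  assumes "coprime y q" and "S \<subseteq> {..<q}"
  shows "card ((\<lambda>s. (y * s) mod q) ` S) = card S"
proof -
  have "inj_on (\<lambda>s. (y * s) mod q) S"
  proof (rule inj_onI)
    fix s t assume "s \<in> S" "t \<in> S" "(y * s) mod q = (y * t) mod q"
    then show "s = t"
      using assms cong_mult_lcancel_nat[of y q s t] by (auto simp: cong_def subset_eq)
  qed
  then show ?thesis
    by (rule card_image)
qed

lemma unit_square_class_eq:
  assumes q: "q \<ge> 2" and y: "y \<in> units_mod q"
  shows "(unit_square_rel q \<inter> units_mod q \<times> units_mod q) `` {y}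
    = (\<lambda>s. (y * s) mod q) ` unit_squares_mod q"
proof -
  have "(y, a) \<in> unit_square_rel q \<longleftrightarrow> (a, y) \<in> unit_square_rel q" for a
    using equiv_unit_square_rel[of q] by (auto simp: equiv_def sym_def)
  moreover have "(a, y) \<in> unit_square_rel q \<longleftrightarrow> a \<in> (\<lambda>s. (y * s) mod q) ` unit_squares_mod q" for a
  proof
    assume "(a, y) \<in> unit_square_rel q"
    then obtain u where "a < q" "coprime u q" "[a = u * u * y] (mod q)"
      by (auto simp: unit_square_rel_def)
    then have "a = (y * ((u mod q) * (u mod q) mod q)) mod q" "u mod q \<in> units_mod q"
      using q by (auto simp: cong_def mod_mult_right_eq mod_mult_left_eq ac_simps units_mod_def)
    then show "a \<in> (\<lambda>s. (y * s) mod q) ` unit_squares_mod q"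
      by (auto simp: unit_squares_mod_def)
  next
    assume "a \<in> (\<lambda>s. (y * s) mod q) ` unit_squares_mod q"
    then obtain v where v: "v \<in> units_mod q" "a = (y * ((v * v) mod q)) mod q"
      by (auto simp: unit_squares_mod_def)
    then have "[a = v * v * y] (mod q)"
      by (simp add: cong_def mod_mult_right_eq ac_simps)
    with v y q show "(a, y) \<in> unit_square_rel q"
      by (auto simp: unit_square_rel_def units_mod_def)
  qed
  moreover have "a \<in> (\<lambda>s. (y * s) mod q) ` unit_squares_mod q \<Longrightarrow> a \<in> units_mod q" for a
    using y q by (auto simp: unit_squares_mod_def units_mod_def)
  ultimately show ?thesis
    using y by blast
qed

lemma squaring_fibre_eq:
  assumes q: "q \<ge> 2" and v0: "v0 \<in> units_mod q"
  shows "{v \<in> units_mod q. (v * v) mod q = (v0 * v0) mod q}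
    = (\<lambda>w. (v0 * w) mod q) ` square_roots_of_one q"
proof safe
  fix v assume v: "v \<in> units_mod q" "(v * v) mod q = (v0 * v0) mod q"
  obtain t where t: "[v0 * t = 1] (mod q)"
    using v0 cong_solve_coprime_nat by (auto simp: units_mod_def)
  define w where "w = (v * t) mod q"
  have w: "[w = v * t] (mod q)"
    by (simp add: w_def cong_def)
  have "[w * w = (v * t) * (v * t)] (mod q)"
    using w w by (rule cong_mult)
  also have "[(v * t) * (v * t) = (v * v) * (t * t)] (mod q)"
    by (simp add: ac_simps)
  also have "[(v * v) * (t * t) = (v0 * v0) * (t * t)] (mod q)"
    using v(2) by (intro cong_mult[OF _ cong_refl]) (simp add: cong_def)
  also have "[(v0 * v0) * (t * t) = (v0 * t) * (v0 * t)] (mod q)"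
    by (simp add: ac_simps)
  also have "[(v0 * t) * (v0 * t) = 1 * 1] (mod q)"
    by (rule cong_mult[OF t t])
  finally have w_root: "w \<in> square_roots_of_one q"
    using q by (simp add: square_roots_of_one_def w_def)
  have "[v0 * w = v0 * (v * t)] (mod q)"
    using w by (rule cong_scalar_left)
  also have "[v0 * (v * t) = v * (v0 * t)] (mod q)"
    by (simp add: ac_simps)
  also have "[v * (v0 * t) = v * 1] (mod q)"
    using t by (rule cong_scalar_left)
  finally have "[v0 * w = v] (mod q)"
    by simp
  then have "v = (v0 * w) mod q"
    using v(1) by (simp add: cong_def units_mod_def)
  with w_root show "v \<in> (\<lambda>w. (v0 * w) mod q) ` square_roots_of_one q"
    by blast
next
  fix w assume w: "w \<in> square_roots_of_one q"
  then show "(v0 * w) mod q \<in> units_mod q"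
    using v0 q square_roots_of_one_subset_units_mod by (auto simp: units_mod_def)
  have "[(v0 * w) * (v0 * w) = (v0 * v0) * (w * w)] (mod q)"
    by (simp add: ac_simps)
  also have "[(v0 * v0) * (w * w) = (v0 * v0) * 1] (mod q)"
    using w by (intro cong_scalar_left) (simp add: square_roots_of_one_def)
  finally show "((v0 * w) mod q * ((v0 * w) mod q)) mod q = (v0 * v0) mod q"
    by (simp add: cong_def mod_mult_left_eq mod_mult_right_eq)
qed

lemma card_unit_squares_mult_card_quotient:
  assumes q: "q \<ge> 2"
  shows "card (unit_squares_mod q) * card (units_mod q // (unit_square_rel q \<inter> units_mod q \<times> units_mod q))
    = card (units_mod q)"
proof -
  let ?U = "units_mod q" and ?R = "unit_square_rel q \<inter> units_mod q \<times> units_mod q"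
  have equiv: "equiv ?U ?R"
    using equiv_unit_square_rel[of q] unfolding equiv_def refl_on_def sym_def trans_def units_mod_def
    by blast
  have fin: "finite ?U"
    by (simp add: units_mod_def)
  have "unit_squares_mod q \<subseteq> {..<q}"
    using q by (auto simp: unit_squares_mod_def)
  then have "card (unit_squares_mod q) * card (?U // ?R) = card (\<Union> (?U // ?R))"
  proof (intro card_partition)
    show "card X = card (unit_squares_mod q)" if "X \<in> ?U // ?R" "unit_squares_mod q \<subseteq> {..<q}" for X
      using that unit_square_class_eq[OF q] card_image_mult_mod
      by (auto elim!: quotientE simp: units_mod_def)
    show "X \<inter> Y = {}" if "X \<in> ?U // ?R" "Y \<in> ?U // ?R" "X \<noteq> Y" for X Y
      using quotient_disj[OF equiv] that by blast
  qed (use fin equiv in \<open>simp_all add: Union_quotient finite_quotient equiv_type\<close>)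
  then show ?thesis
    by (simp add: Union_quotient[OF equiv])
qed

lemma card_square_roots_of_one_mult_card_unit_squares:
  assumes q: "q \<ge> 2"
  shows "card (square_roots_of_one q) * card (unit_squares_mod q) = card (units_mod q)"
proof -
  let ?fibre = "\<lambda>s. {v \<in> units_mod q. (v * v) mod q = s}"
  have fibres: "\<Union> (?fibre ` unit_squares_mod q) = units_mod q"
    by (auto simp: unit_squares_mod_def)
  have "inj_on ?fibre (unit_squares_mod q)"
    by (rule inj_onI) (auto simp: unit_squares_mod_def)
  moreover have "square_roots_of_one q \<subseteq> {..<q}"
    by (auto simp: square_roots_of_one_def)
  then have "card (square_roots_of_one q) * card (?fibre ` unit_squares_mod q)
      = card (\<Union> (?fibre ` unit_squares_mod q))"
  proof (intro card_partition)
    show "card X = card (square_roots_of_one q)"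
      if "X \<in> ?fibre ` unit_squares_mod q" "square_roots_of_one q \<subseteq> {..<q}" for X
      using that squaring_fibre_eq[OF q] card_image_mult_mod
      by (auto simp: unit_squares_mod_def units_mod_def)
  qed (use fibres in \<open>auto simp: unit_squares_mod_def units_mod_def\<close>)
  ultimately show ?thesis
    using fibres by (simp add: card_image)
qed

text \<open>Both counts are \<open>|U| / |U\<^sup>2|\<close>: the classes of the unit group \<open>U\<close> are the cosets of the
  squares \<open>U\<^sup>2\<close>, and the fibres of squaring are the cosets of the square roots of one.\<close>
lemma card_units_mod_quotient:
  assumes q: "q \<ge> 2"
  shows "card (units_mod q // (unit_square_rel q \<inter> units_mod q \<times> units_mod q))
    = card (square_roots_of_one q)"
proof -
  have "card (unit_squares_mod q) > 0"
    using q by (auto simp: unit_squares_mod_def units_mod_def card_gt_0_iff intro!: exI[of _ 1])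
  then show ?thesis
    using card_unit_squares_mult_card_quotient[OF q] card_square_roots_of_one_mult_card_unit_squares[OF q]
    by (metis mult.commute mult_left_cancel not_gr0)
qed

lemma coprime_prime_power_Suc_iff:
  fixes p a :: nat
  assumes "prime p"
  shows "coprime a (p ^ Suc k) \<longleftrightarrow> \<not> p dvd a"
  using assms prime_imp_power_coprime[OF assms] coprime_common_divisor_nat[of a "p ^ Suc k" p]
  by (auto simp: prime_gt_1_nat)

lemma unit_square_rel_prime_power_mult_iff:
  fixes p k a b :: nat
  assumes p: "prime p" and ab: "a < p ^ k" "b < p ^ k"
  shows "(p * a, p * b) \<in> unit_square_rel (p ^ Suc k) \<longleftrightarrow> (a, b) \<in> unit_square_rel (p ^ k)"
proof (cases "k = 0")
  case True
  with ab have "a = 0" "b = 0"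
    by auto
  with True prime_gt_1_nat[OF p] show ?thesis
    by (auto simp: unit_square_rel_def intro!: exI[of _ 1])
next
  case False
  have "p > 0"
    using p by (simp add: prime_gt_0_nat)
  have coprime_iff: "coprime u (p ^ Suc k) \<longleftrightarrow> coprime u (p ^ k)" for u
    using False coprime_prime_power_Suc_iff[OF p, of u "k - 1"] coprime_prime_power_Suc_iff[OF p, of u k]
    by simp
  have cong_iff: "[p * a = u * u * (p * b)] (mod p ^ Suc k) \<longleftrightarrow> [a = u * u * b] (mod p ^ k)" for u
  proof -
    have "[p * a = u * u * (p * b)] (mod p ^ Suc k) \<longleftrightarrow> [p * a = p * (u * u * b)] (mod p * p ^ k)"
      by (simp add: ac_simps)
    also have "\<dots> \<longleftrightarrow> [a = u * u * b] (mod p ^ k)"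
      using \<open>p > 0\<close> by (simp add: cong_def mult_mod_right[symmetric])
    finally show ?thesis .
  qed
  show ?thesis
    using ab \<open>p > 0\<close> coprime_iff cong_iff unfolding unit_square_rel_def
    by (simp del: coprime_power_right_iff)
qed

lemma card_multiples_prime_power_quotient:
  fixes p k :: nat
  assumes p: "prime p"
  defines "A \<equiv> {a. a < p ^ Suc k \<and> p dvd a}"
  shows "card (A // (unit_square_rel (p ^ Suc k) \<inter> A \<times> A)) = num_unit_square_classes (p ^ k)"
proof -
  have "p > 0"
    using p by (simp add: prime_gt_0_nat)
  have bij: "bij_betw ((*) p) {..<p ^ k} A"
  proof (rule bij_betw_imageI)
    show "inj_on ((*) p) {..<p ^ k}"
      using \<open>p > 0\<close> by (auto intro: inj_onI)
    show "(*) p ` {..<p ^ k} = A"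
      using \<open>p > 0\<close> by (auto simp: A_def elim!: dvdE)
  qed
  then show ?thesis
    unfolding num_unit_square_classes_def
    using unit_square_rel_prime_power_mult_iff[OF p]
    by (intro card_quotient_bij_betw[OF bij unit_square_rel_subset, symmetric]) (auto simp: bij_betw_def)
qed

lemma unit_square_rel_prime_power_subset:
  fixes p k :: nat
  assumes p: "prime p"
  defines "q \<equiv> p ^ Suc k"
  defines "A \<equiv> {a. a < q \<and> p dvd a}"
  shows "unit_square_rel q \<subseteq> A \<times> A \<union> units_mod q \<times> units_mod q"
proof
  fix x assume "x \<in> unit_square_rel q"
  then obtain a b u where x: "x = (a, b)" "a < q" "b < q" "coprime u q" "[a = u * u * b] (mod q)"
    by (auto simp: unit_square_rel_def)
  have "[a = u * u * b] (mod p)"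
    using x(5) by (rule cong_dvd_modulus_nat) (simp add: q_def)
  moreover have "\<not> p dvd u"
    using x(4) coprime_prime_power_Suc_iff[OF p] by (simp add: q_def)
  ultimately have "p dvd a \<longleftrightarrow> p dvd b"
    using p by (simp add: cong_dvd_iff prime_dvd_mult_iff)
  then show "x \<in> A \<times> A \<union> units_mod q \<times> units_mod q"
    using x coprime_prime_power_Suc_iff[OF p] by (auto simp: A_def units_mod_def q_def)
qed

lemma num_unit_square_classes_prime_power_Suc:
  fixes p k :: nat
  assumes p: "prime p"
  shows "num_unit_square_classes (p ^ Suc k)
    = num_unit_square_classes (p ^ k) + card (square_roots_of_one (p ^ Suc k))"
proof -
  define q where "q = p ^ Suc k"
  define A where "A = {a. a < q \<and> p dvd a}"
  have "p \<le> q"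
    using prime_gt_0_nat[OF p] by (simp add: q_def)
  then have "q \<ge> 2"
    using prime_ge_2_nat[OF p] by linarith
  have units: "units_mod q = {a. a < q \<and> \<not> p dvd a}"
    using coprime_prime_power_Suc_iff[OF p] by (auto simp: units_mod_def q_def)
  have partition: "{..<q} = A \<union> units_mod q"
    by (auto simp: A_def units)
  have "num_unit_square_classes q = card ((A \<union> units_mod q) // unit_square_rel q)"
    by (simp add: num_unit_square_classes_def partition)
  also have "\<dots> = card (A // (unit_square_rel q \<inter> A \<times> A))
      + card (units_mod q // (unit_square_rel q \<inter> units_mod q \<times> units_mod q))"
  proof (rule card_quotient_Un)
    show "unit_square_rel q \<subseteq> A \<times> A \<union> units_mod q \<times> units_mod q"
      using unit_square_rel_prime_power_subset[OF p] by (simp add: A_def q_def)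
    show "(x, x) \<in> unit_square_rel q" if "x \<in> A \<union> units_mod q" for x
      using that equiv_unit_square_rel[of q] partition by (auto simp: equiv_def refl_on_def)
  qed (auto simp: A_def units)
  finally show ?thesis
    using card_multiples_prime_power_quotient[OF p] card_units_mod_quotient[OF \<open>q \<ge> 2\<close>]
    by (simp add: q_def A_def)
qed

section \<open>Square roots of one modulo prime powers\<close>

lemma square_roots_of_one_iff:
  assumes "q \<ge> 2"
  shows "x \<in> square_roots_of_one q \<longleftrightarrow> x < q \<and> x \<ge> 1 \<and> q dvd (x - 1) * (x + 1)"
proof (cases "x = 0")
  case False
  have "[x * x = 1] (mod q) \<longleftrightarrow> q dvd x * x - 1"
    using False cong_altdef_nat[of 1 "x * x" q] by (simp add: cong_sym_eq)
  also have "x * x - 1 = (x - 1) * (x + 1)"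
    using False by (cases x) simp_all
  finally show ?thesis
    using False by (auto simp: square_roots_of_one_def)
qed (use assms in \<open>simp add: square_roots_of_one_def cong_def\<close>)

lemma card_square_roots_of_one_odd_prime_power:
  fixes p :: nat
  assumes p: "prime p" and odd: "p \<noteq> 2"
  shows "card (square_roots_of_one (p ^ Suc k)) = 2"
proof -
  define q where "q = p ^ Suc k"
  have "p \<ge> 3"
    using prime_ge_2_nat[OF p] odd by simp
  moreover have "p \<le> q"
    using prime_gt_0_nat[OF p] by (simp add: q_def)
  ultimately have q: "q \<ge> 3"
    by linarith
  have "square_roots_of_one q = {1, q - 1}"
  proof (intro equalityI subsetI)
    fix x assume "x \<in> square_roots_of_one q"
    moreover have "q \<ge> 2"
      using q by simp
    ultimately have x: "x < q" "x \<ge> 1" "q dvd (x - 1) * (x + 1)"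
      using square_roots_of_one_iff by blast+
    have "\<not> (p dvd x - 1 \<and> p dvd x + 1)"
    proof
      assume "p dvd x - 1 \<and> p dvd x + 1"
      then have "p dvd (x + 1) - (x - 1)"
        using dvd_diff_nat by blast
      then have "p dvd 2"
        using x(2) by (simp add: numeral_2_eq_2)
      then show False
        using \<open>p \<ge> 3\<close> by (auto dest: dvd_imp_le)
    qed
    then have "q dvd x - 1 \<or> q dvd x + 1"
      using x(3) prime_power_dvd_multD[of p "Suc k" "x - 1" "x + 1"]
        prime_power_dvd_multD[of p "Suc k" "x + 1" "x - 1"] p
      unfolding q_def by (auto simp: mult.commute)
    then show "x \<in> {1, q - 1}"
      using x(1,2) by (auto dest!: dvd_imp_le[rotated] simp: dvd_eq_mod_eq_0)
  qed (use q square_roots_of_one_iff in \<open>auto simp: algebra_simps\<close>)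
  then show ?thesis
    using q by (simp add: q_def)
qed

lemma card_square_roots_of_one_2: "card (square_roots_of_one 2) = 1"
proof -
  have "square_roots_of_one 2 = {1}"
    by (auto simp: square_roots_of_one_def cong_def less_2_cases_iff)
  then show ?thesis by simp
qed

lemma card_square_roots_of_one_4: "card (square_roots_of_one 4) = 2"
proof -
  have "square_roots_of_one 4 = {1, 3}"
  proof (intro equalityI subsetI)
    fix x assume "x \<in> square_roots_of_one 4"
    moreover have "x < 4 \<Longrightarrow> x = 0 \<or> x = 1 \<or> x = 2 \<or> x = (3::nat)"
      by linarith
    ultimately show "x \<in> {1, 3}"
      by (auto simp: square_roots_of_one_def cong_def)
  qed (auto simp: square_roots_of_one_def cong_def)
  then show ?thesis by simp
qed

lemma two_power_dvd_pred_or_succ: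
  fixes x k :: nat
  assumes dvd: "2 ^ (k + 3) dvd (x - 1) * (x + 1)" and "x \<ge> 1"
  shows "2 ^ (k + 2) dvd x - 1 \<or> 2 ^ (k + 2) dvd x + 1"
proof -
  have "odd x"
  proof
    assume "even x"
    then have "odd ((x - 1) * (x + 1))"
      using \<open>x \<ge> 1\<close> by simp
    moreover have "even ((x - 1) * (x + 1))"
      using dvd_trans[OF _ dvd, of 2] by simp
    ultimately show False
      by blast
  qed
  then obtain a where a: "x = 2 * a + 1"
    by (blast elim: oddE)
  have "(x - 1) * (x + 1) = 4 * (a * (a + 1))"
    by (simp add: a algebra_simps)
  moreover have "(2::nat) ^ (k + 3) = 4 * 2 ^ (k + 1)"
    by (simp add: power_add)
  ultimately have "4 * 2 ^ (k + 1) dvd 4 * (a * (a + 1))"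
    using dvd by simp
  then have "2 ^ (k + 1) dvd a * (a + 1)"
    by (metis nat_mult_dvd_cancel1 zero_less_numeral)
  moreover have "\<not> (2 dvd a \<and> 2 dvd a + 1)"
    by simp
  ultimately have "2 ^ (k + 1) dvd a \<or> 2 ^ (k + 1) dvd a + 1"
    using prime_power_dvd_multD[of 2 "k + 1" a "a + 1"] prime_power_dvd_multD[of 2 "k + 1" "a + 1" a]
    by (auto simp: mult.commute)
  then have "2 * 2 ^ (k + 1) dvd 2 * a \<or> 2 * 2 ^ (k + 1) dvd 2 * (a + 1)"
    using mult_dvd_mono[OF dvd_refl[of 2]] by blast
  then show ?thesis
    by (simp add: a)
qed

lemma pred_or_succ_multiple_cases:
  fixes h x :: nat
  assumes "h dvd x - 1 \<or> h dvd x + 1" and "x \<ge> 1" and "x < 2 * h"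
  shows "x \<in> {1, h - 1, h + 1, 2 * h - 1}"
  using assms(1)
proof
  assume "h dvd x - 1"
  then obtain t where t: "x - 1 = h * t" ..
  then have "h * t < h * 2"
    using assms(3) by linarith
  then have "t < 2"
    using mult_less_cancel1[of h t 2] by blast
  with t assms(2) show ?thesis
    by (auto simp: less_2_cases_iff)
next
  assume "h dvd x + 1"
  then obtain t where t: "x + 1 = h * t" ..
  then have "h * t \<le> h * 2"
    using assms(3) by linarith
  moreover have "t \<noteq> 0"
    using t by (cases "t = 0") simp_all
  ultimately have "t = 1 \<or> t = 2"
    using mult_le_cancel1[of h t 2] assms(3) by auto
  with t show ?thesis
    by auto
qed

lemma square_roots_of_one_mult_8_superset:
  fixes m :: nat
  assumes "m \<ge> 1"
  shows "{1, 4 * m - 1, 4 * m + 1, 8 * m - 1} \<subseteq> square_roots_of_one (8 * m)"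
proof
  obtain m' where m': "m = Suc m'"
    using assms by (cases m) auto
  fix x assume x: "x \<in> {1, 4 * m - 1, 4 * m + 1, 8 * m - 1}"
  then consider "x = 1" | "x = 4 * m - 1" | "x = 4 * m + 1" | "x = 8 * m - 1"
    by blast
  then have "8 * m dvd (x - 1) * (x + 1)"
  proof cases
    case 2
    then have "(x - 1) * (x + 1) = 8 * m * (2 * m' + 1)"
      by (simp add: m' algebra_simps)
    then show ?thesis by simp
  next
    case 3
    then have "(x - 1) * (x + 1) = 8 * m * (2 * m + 1)"
      by (simp add: algebra_simps)
    then show ?thesis by simp
  next
    case 4
    then have "(x - 1) * (x + 1) = 8 * m * (8 * m' + 6)"
      by (simp add: m' algebra_simps)
    then show ?thesis by simp
  qed simp
  moreover have "x < 8 * m" "x \<ge> 1"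
    using x m' by auto
  ultimately show "x \<in> square_roots_of_one (8 * m)"
    using square_roots_of_one_iff[of "8 * m" x] m' by simp
qed

lemma card_square_roots_of_one_two_power:
  "card (square_roots_of_one (2 ^ (k + 3))) = 4"
proof -
  define m :: nat where "m = 2 ^ k"
  have "m \<ge> 1"
    by (simp add: m_def)
  have powers: "2 ^ (k + 2) = 4 * m" "2 ^ (k + 3) = 8 * m"
    by (simp_all add: m_def power_add)
  have "square_roots_of_one (8 * m) \<subseteq> {1, 4 * m - 1, 4 * m + 1, 8 * m - 1}"
  proof
    fix x assume "x \<in> square_roots_of_one (8 * m)"
    then have x: "x < 8 * m" "x \<ge> 1" "8 * m dvd (x - 1) * (x + 1)"
      using square_roots_of_one_iff[of "8 * m" x] \<open>m \<ge> 1\<close> by auto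
    then have "4 * m dvd x - 1 \<or> 4 * m dvd x + 1"
      using two_power_dvd_pred_or_succ[of k x] unfolding powers by blast
    moreover have "x < 2 * (4 * m)"
      using x(1) by simp
    ultimately have "x \<in> {1, 4 * m - 1, 4 * m + 1, 2 * (4 * m) - 1}"
      using pred_or_succ_multiple_cases x(2) by blast
    then show "x \<in> {1, 4 * m - 1, 4 * m + 1, 8 * m - 1}"
      by simp
  qed
  then have "square_roots_of_one (8 * m) = {1, 4 * m - 1, 4 * m + 1, 8 * m - 1}"
    using square_roots_of_one_mult_8_superset[OF \<open>m \<ge> 1\<close>] by blast
  moreover obtain m' where "m = Suc m'"
    using \<open>m \<ge> 1\<close> by (cases m) auto
  ultimately show ?thesis
    by (simp add: powers)
qed

lemma num_unit_square_classes_odd_prime_power: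
  assumes "prime p" and "p \<noteq> 2"
  shows "num_unit_square_classes (p ^ k) = 2 * k + 1"
proof (induction k)
  case (Suc k)
  then show ?case
    using num_unit_square_classes_prime_power_Suc[OF assms(1), of k]
      card_square_roots_of_one_odd_prime_power[OF assms, of k] by simp
qed simp

lemma num_unit_square_classes_two_power:
  "num_unit_square_classes (2 ^ k) =
    (if k = 0 then 1 else if k = 1 then 2 else if k = 2 then 4 else 4 * (k - 1))"
proof -
  have two: "prime (2::nat)"
    by simp
  have small: "num_unit_square_classes (2 ^ 0) = 1" "num_unit_square_classes (2 ^ 1) = 2"
    "num_unit_square_classes (2 ^ 2) = 4"
    using num_unit_square_classes_prime_power_Suc[OF two, of 0]
      num_unit_square_classes_prime_power_Suc[OF two, of 1]
    by (simp_all add: card_square_roots_of_one_2 card_square_roots_of_one_4)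
  have large: "num_unit_square_classes (2 ^ (j + 3)) = 4 * (j + 2)" for j
  proof (induction j)
    case 0
    then show ?case
      using num_unit_square_classes_prime_power_Suc[OF two, of 2] small(3)
        card_square_roots_of_one_two_power[of 0] by simp
  next
    case (Suc j)
    then show ?case
      using num_unit_square_classes_prime_power_Suc[OF two, of "j + 3"]
        card_square_roots_of_one_two_power[of "Suc j"] by simp
  qed
  show ?thesis
  proof (cases "k \<ge> 3")
    case True
    then obtain j where "k = j + 3"
      by (metis add.commute le_Suc_ex)
    with large[of j] show ?thesis
      by simp
  next
    case False
    then have "k = 0 \<or> k = 1 \<or> k = 2"
      by auto
    with small show ?thesis
      by auto
  qed
qed

lemma num_unit_square_classes_prod_prime_powers:
  assumes "finite P" and "\<forall>p\<in>P. prime p"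
  shows "num_unit_square_classes (\<Prod>p\<in>P. p ^ e p) = (\<Prod>p\<in>P. num_unit_square_classes (p ^ e p))"
  using assms
proof (induction P rule: finite_induct)
  case (insert p P)
  have "coprime (p ^ e p) (\<Prod>p\<in>P. p ^ e p)"
  proof (rule prod_coprime_right)
    fix q assume "q \<in> P"
    then have "coprime p q"
      using insert by (intro primes_coprime) auto
    then show "coprime (p ^ e p) (q ^ e q)"
      by simp
  qed
  moreover have "p ^ e p > 0" "(\<Prod>p\<in>P. p ^ e p) > 0"
    using insert by (auto simp: prime_gt_0_nat prod_pos)
  ultimately show ?case
    using insert by (simp add: num_unit_square_classes_mult)
qed simp

lemma num_unit_square_classes_eq:
  assumes "n \<ge> 1"
  shows "num_unit_square_classes n = num_unit_square_classes (2 ^ multiplicity 2 n)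
    * (\<Prod>p\<in>prime_factors n - {2}. 2 * multiplicity p n + 1)"
proof -
  have odd_factors: "(\<Prod>p\<in>prime_factors n - {2}. num_unit_square_classes (p ^ multiplicity p n))
      = (\<Prod>p\<in>prime_factors n - {2}. 2 * multiplicity p n + 1)"
    by (intro prod.cong refl num_unit_square_classes_odd_prime_power) auto
  have "num_unit_square_classes n = num_unit_square_classes (\<Prod>p\<in>prime_factors n. p ^ multiplicity p n)"
    using arg_cong[OF prime_factorization_nat[of n], of num_unit_square_classes] assms by simp
  also have "\<dots> = (\<Prod>p\<in>prime_factors n. num_unit_square_classes (p ^ multiplicity p n))"
    by (rule num_unit_square_classes_prod_prime_powers) auto
  also have "\<dots> = num_unit_square_classes (2 ^ multiplicity 2 n)
      * (\<Prod>p\<in>prime_factors n - {2}. num_unit_square_classes (p ^ multiplicity p n))"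
  proof (cases "2 \<in> prime_factors n")
    case True
    then show ?thesis
      by (simp add: prod.remove)
  next
    case False
    then have "multiplicity 2 n = 0"
      using assms by (auto simp: prime_factors_multiplicity)
    with False show ?thesis
      by simp
  qed
  finally show ?thesis
    by (simp add: odd_factors)
qed

lemma c_count_eq_num_unit_square_classes:
  assumes n: "n \<ge> 1"
  shows "c_count TYPE('k::{alg_closed_field, field_char_0}) n = num_unit_square_classes n"
proof (cases "n = 1")
  case True
  have "{\<zeta>::'k. \<zeta> ^ 1 = 1} = {1}"
    by auto
  then show ?thesis
    using True by (simp add: c_count_def quotient_def)
next
  case False
  with n have "n \<ge> 2"
    by simp
  obtain g :: 'k where g: "primitive_root_of_unity n g"
    using primitive_root_of_unity_exists[OF n] by blast
  define E where "E = {(\<zeta>::'k, \<zeta>'). \<zeta> ^ n = 1 \<and> \<zeta>' ^ n = 1 \<and> vec_monoidal_equiv n \<zeta> \<zeta>'}"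
  have root: "(g ^ b) ^ n = 1" for b
    using g by (simp add: primitive_root_of_unity_def flip: power_mult mult.commute)
  have "(a, b) \<in> unit_square_rel n \<longleftrightarrow> (g ^ a, g ^ b) \<in> E" if "a < n" "b < n" for a b
  proof -
    have "(g ^ a, g ^ b) \<in> E \<longleftrightarrow> (\<exists>u. coprime u n \<and> g ^ a = g ^ (u * u * b))"
      using vec_monoidal_equiv_iff_square_power[OF \<open>n \<ge> 2\<close> root, of "g ^ a"] root
      by (simp add: E_def power_mult mult.commute)
    also have "\<dots> \<longleftrightarrow> (a, b) \<in> unit_square_rel n"
      using that primitive_root_of_unity_power_eq_iff[OF g n] by (simp add: unit_square_rel_def)
    finally show ?thesis ..
  qed
  then have "num_unit_square_classes n = card ({\<zeta>::'k. \<zeta> ^ n = 1} // E)"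
    unfolding num_unit_square_classes_def
    by (intro card_quotient_bij_betw[OF bij_betw_powers_roots_of_unity[OF g n] unit_square_rel_subset])
      (auto simp: E_def)
  then show ?thesis
    by (simp add: c_count_def E_def)
qed

theorem mainTheorem3:
  fixes n :: nat
  assumes "n \<ge> 1"
  defines "k0 \<equiv> multiplicity (2::nat) n"
  defines "P \<equiv> (\<Prod>p\<in>prime_factors n - {2}. 2 * multiplicity p n + 1)"
  shows "c_count TYPE('k::{alg_closed_field, field_char_0}) n =
           (if k0 = 0 then P
            else if k0 = 1 then 2 * P
            else if k0 = 2 then 4 * P
            else 4 * (k0 - 1) * P)"
proof -
  have "c_count TYPE('k) n = num_unit_square_classes (2 ^ k0) * P"
    using c_count_eq_num_unit_square_classes[OF assms(1), where 'k = 'k] num_unit_square_classes_eq[OF assms(1)]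
    by (simp add: k0_def P_def)
  then show ?thesis
    by (simp add: num_unit_square_classes_two_power)
qed

end
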